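(* Let $n\geq 2$, $m\geq 1$, $r\geq 4$ be integers and let $\alpha$ be an integer with $1\leq\alpha<(m+1)^n$. Then $\Gamma_n^{\alpha,r}$ is homotopy equivalent to the induced subcomplex of $\Gamma_n^{\alpha,r}$ on the vertex set $\{x\in V(\Gamma_n^{\alpha,r}) : |x_i|<\lfloor r/2\rfloor \text{ and } |x_j|+|x_k|\leq\lceil r/2\rceil \text{ for all } i,j,k\in[n],\ j\neq k\}$.
   Context: $[n]=\{1,\ldots,n\}$. $\mathbb{Z}^n$ carries the Manhattan metric $d(x,y)=\sum_i|x_i-y_i|$; for $X\subseteq\mathbb{Z}^n$, $\mathrm{VR}(X;r)$ is the simplicial complex on $X$ whose simplices are finite subsets of diameter at most $r$. Let $\prec$ be the anti-lexicographic order on $\mathbb{Z}^n$: $x\prec y$ iff at the largest index $i$ with $x_i\neq y_i$ one has $x_i<y_i$. Let $V_m=\{0,\ldots,m\}^n$. Let $H$ be $V_m$ with its first $\alpha$ elements (with respect to $\prec$) removed, $\delta$ the $\prec$-least element of $H$, and $Y=\{x-\delta: x\in H\}$ (so $\mathbf{0}$ is the least element of $Y$). Then $\Gamma_n^{\alpha,r}$ is the link of $\mathbf{0}$ in $\mathrm{VR}(Y;r)$, i.e. the complex of simplices $\tau$ of $\mathrm{VR}(Y;r)$ with $\mathbf{0}\notin\tau$ and $\tau\cup\{\mathbf{0}\}\in\mathrm{VR}(Y;r)$. The induced subcomplex of $K$ on a vertex set $W$ consists of the simplices of $K$ contained in $W$. *)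

theory Defs
  imports "HOL-Analysis.Analysis"
begin

text \<open>Points of Z^n are integer lists of length n; coordinate i of [n] is list index i-1.\<close>

definition manhattan :: "int list \<Rightarrow> int list \<Rightarrow> int" where
  "manhattan x y = (\<Sum>i<length x. \<bar>x ! i - y ! i\<bar>)"

definition antilex :: "int list \<Rightarrow> int list \<Rightarrow> bool" where
  "antilex x y \<longleftrightarrow> length x = length y \<and>
     (\<exists>i<length x. x ! i < y ! i \<and> (\<forall>j. i < j \<and> j < length x \<longrightarrow> x ! j = y ! j))"

definition cube :: "nat \<Rightarrow> nat \<Rightarrow> int list set" where
  "cube n m = {x. length x = n \<and> (\<forall>i<n. 0 \<le> x ! i \<and> x ! i \<le> int m)}"

text \<open>V_m with its first alpha elements (w.r.t. antilex) removed: keep those with at least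
  alpha predecessors.\<close>
definition Hset :: "nat \<Rightarrow> nat \<Rightarrow> nat \<Rightarrow> int list set" where
  "Hset n m \<alpha> = {x \<in> cube n m. \<alpha> \<le> card {y \<in> cube n m. antilex y x}}"

definition delta :: "nat \<Rightarrow> nat \<Rightarrow> nat \<Rightarrow> int list" where
  "delta n m \<alpha> = (THE d. d \<in> Hset n m \<alpha> \<and> (\<forall>y \<in> Hset n m \<alpha>. y \<noteq> d \<longrightarrow> antilex d y))"

definition Yset :: "nat \<Rightarrow> nat \<Rightarrow> nat \<Rightarrow> int list set" where
  "Yset n m \<alpha> = (\<lambda>x. map2 (-) x (delta n m \<alpha>)) ` Hset n m \<alpha>"

definition VR :: "int list set \<Rightarrow> int \<Rightarrow> int list set set" where
  "VR X r = {\<tau>. \<tau> \<subseteq> X \<and> finite \<tau> \<and> (\<forall>x\<in>\<tau>. \<forall>y\<in>\<tau>. manhattan x y \<le> r)}"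

definition link :: "'a set set \<Rightarrow> 'a \<Rightarrow> 'a set set" where
  "link K v = {\<tau> \<in> K. v \<notin> \<tau> \<and> insert v \<tau> \<in> K}"

definition Gamma :: "nat \<Rightarrow> nat \<Rightarrow> nat \<Rightarrow> int \<Rightarrow> int list set set" where
  "Gamma n m \<alpha> r = link (VR (Yset n m \<alpha>) r) (replicate n 0)"

definition vertices :: "'a set set \<Rightarrow> 'a set" where
  "vertices K = {v. {v} \<in> K}"

definition induced :: "'a set set \<Rightarrow> 'a set \<Rightarrow> 'a set set" where
  "induced K W = {\<tau> \<in> K. \<tau> \<subseteq> W}"

text \<open>Geometric realization of a simplicial complex K (a family of finite vertex sets):
  the nonnegative functions supported on a simplex of K with total weight 1, with the
  subspace topology of the product topology (for finite complexes this is the usual one).\<close>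
definition geom_real :: "'a set set \<Rightarrow> ('a \<Rightarrow> real) topology" where
  "geom_real K = subtopology (powertop_real UNIV)
     {f. \<exists>\<sigma>\<in>K. finite \<sigma> \<and> (\<forall>v. f v \<noteq> 0 \<longrightarrow> v \<in> \<sigma>) \<and> (\<forall>v. 0 \<le> f v) \<and> sum f \<sigma> = 1}"

end

theory Submission
  imports Defs
begin

text \<open>
  \<open>\<Gamma>\<close> is the flag complex of the relation \<open>d(a, b) \<le> r\<close> on its vertex set: the
  nonzero, antilexicographically positive lattice points \<open>y\<close> of the shifted cube
  \<open>V\<^sub>m - \<delta>\<close> with \<open>\<parallel>y\<parallel>\<^sub>1 \<le> r\<close>. This set is closed under moving coordinates one step
  towards 0, as long as positivity is kept.

  If every neighbour of a vertex \<open>x\<close> is also a neighbour of another vertex \<open>y\<close>, deleting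
  \<open>x\<close> is a homotopy equivalence: sliding the weight of \<open>x\<close> onto \<open>y\<close> is a deformation
  retraction. Rank the vertices by \<open>\<parallel>x\<parallel>\<^sub>1 + 2\<close>, except that the core points of the theorem
  get rank 0 and the "spike" points (\<open>r\<close> odd, norm \<open>r\<close>, one coordinate \<open>\<plusminus>\<lfloor>r/2\<rfloor>\<close>, all
  others in \<open>{-1, 0, 1}\<close>) get rank 1. Every vertex of positive rank is dominated, among the
  vertices of no larger rank, by a vertex of smaller rank obtained by moving one or two of
  its coordinates one step towards 0. Deleting the vertices in order of decreasing rank
  therefore leaves the core.

  Only \<open>r \<ge> 4\<close> and \<open>\<alpha> < (m + 1)\<^sup>n\<close> are used.
\<close>

section \<open>Deleting dominated vertices\<close>

definition simplex_points :: "'a set \<Rightarrow> ('a \<Rightarrow> real) set" where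
  "simplex_points \<sigma> =
     {f. finite \<sigma> \<and> (\<forall>v. f v \<noteq> 0 \<longrightarrow> v \<in> \<sigma>) \<and> (\<forall>v. 0 \<le> f v) \<and> sum f \<sigma> = 1}"

lemma topspace_geom_real: "topspace (geom_real K) = (\<Union>\<sigma>\<in>K. simplex_points \<sigma>)"
  by (auto simp: geom_real_def simplex_points_def)

lemma simplex_points_mono:
  assumes "\<sigma> \<subseteq> \<tau>" "finite \<tau>"
  shows "simplex_points \<sigma> \<subseteq> simplex_points \<tau>"
proof
  fix f assume "f \<in> simplex_points \<sigma>"
  moreover from this have "sum f \<tau> = sum f \<sigma>"
    using assms by (intro sum.mono_neutral_right) (auto simp: simplex_points_def)
  ultimately show "f \<in> simplex_points \<tau>"
    using assms by (auto simp: simplex_points_def)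
qed

lemma simplex_points_remove:
  assumes "f \<in> simplex_points \<sigma>" "f x = 0"
  shows "f \<in> simplex_points (\<sigma> - {x})"
  using assms by (auto simp: simplex_points_def sum_diff1)

definition move_weight :: "'a \<Rightarrow> 'a \<Rightarrow> real \<Rightarrow> ('a \<Rightarrow> real) \<Rightarrow> 'a \<Rightarrow> real" where
  "move_weight x y t f = (\<lambda>v. f v + t * f x * (of_bool (v = y) - of_bool (v = x)))"

lemma move_weight_0 [simp]: "move_weight x y 0 f = f"
  by (simp add: move_weight_def)

lemma move_weight_unweighted: "f x = 0 \<Longrightarrow> move_weight x y t f = f"
  by (simp add: move_weight_def)

lemma move_weight_1_at_source: "x \<noteq> y \<Longrightarrow> move_weight x y 1 f x = 0"
  by (simp add: move_weight_def)

lemma move_weight_simplex_points: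
  assumes "x \<noteq> y" "x \<in> \<sigma>" "f \<in> simplex_points \<sigma>" "0 \<le> t" "t \<le> 1"
  shows "move_weight x y t f \<in> simplex_points (insert y \<sigma>)"
proof -
  have f: "finite \<sigma>" "\<forall>v. f v \<noteq> 0 \<longrightarrow> v \<in> \<sigma>" "\<forall>v. 0 \<le> f v" "sum f \<sigma> = 1"
    using assms(3) by (auto simp: simplex_points_def)
  have "0 \<le> move_weight x y t f v" for v
    using f(3)[rule_format, of v] f(3)[rule_format, of x] assms(1,4,5)
    by (auto simp: move_weight_def mult_left_le_one_le algebra_simps)
  moreover have "sum (move_weight x y t f) (insert y \<sigma>) = sum f (insert y \<sigma>)"
    using f(1) assms(2)
    by (simp add: move_weight_def sum.distrib sum_subtractf of_bool_def flip: sum_distrib_left)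
  moreover have "sum f (insert y \<sigma>) = 1"
    using simplex_points_mono[of \<sigma> "insert y \<sigma>"] assms(3) f(1)
    by (auto simp: simplex_points_def)
  ultimately show ?thesis
    using f by (auto simp: simplex_points_def move_weight_def)
qed

lemma move_weight_in_geom_real:
  assumes "x \<noteq> y" and dom: "\<And>\<sigma>. \<sigma> \<in> K \<Longrightarrow> x \<in> \<sigma> \<Longrightarrow> insert y \<sigma> \<in> K"
    and f: "f \<in> topspace (geom_real K)" and "0 \<le> t" "t \<le> 1"
  shows "move_weight x y t f \<in> topspace (geom_real K)"
proof -
  obtain \<sigma> where \<sigma>: "\<sigma> \<in> K" "f \<in> simplex_points \<sigma>"
    using f unfolding topspace_geom_real by blast
  show ?thesis
  proof (cases "x \<in> \<sigma>")
    case True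
    then show ?thesis
      using move_weight_simplex_points[OF \<open>x \<noteq> y\<close> True \<sigma>(2) \<open>0 \<le> t\<close> \<open>t \<le> 1\<close>] dom[OF \<sigma>(1) True]
      by (auto simp: topspace_geom_real)
  next
    case False
    then have "f x = 0"
      using \<sigma>(2) by (auto simp: simplex_points_def)
    then show ?thesis
      using f by (simp add: move_weight_unweighted)
  qed
qed

lemma move_weight_1_in_geom_real_delete:
  assumes down: "\<And>\<sigma> \<tau>. \<sigma> \<in> K \<Longrightarrow> \<tau> \<subseteq> \<sigma> \<Longrightarrow> \<tau> \<in> K"
    and "x \<noteq> y" and dom: "\<And>\<sigma>. \<sigma> \<in> K \<Longrightarrow> x \<in> \<sigma> \<Longrightarrow> insert y \<sigma> \<in> K"
    and f: "f \<in> topspace (geom_real K)"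
  shows "move_weight x y 1 f \<in> topspace (geom_real (induced K (- {x})))"
proof -
  obtain \<sigma> where \<sigma>: "\<sigma> \<in> K" "f \<in> simplex_points \<sigma>"
    using f unfolding topspace_geom_real by blast
  show ?thesis
  proof (cases "x \<in> \<sigma>")
    case True
    have "move_weight x y 1 f \<in> simplex_points (insert y \<sigma> - {x})"
      using move_weight_simplex_points[OF \<open>x \<noteq> y\<close> True \<sigma>(2)]
      by (intro simplex_points_remove move_weight_1_at_source \<open>x \<noteq> y\<close>) auto
    moreover have "insert y \<sigma> - {x} \<in> induced K (- {x})"
      using down[OF dom[OF \<sigma>(1) True]] by (auto simp: induced_def)
    ultimately show ?thesis
      by (auto simp: topspace_geom_real)
  next
    case False
    then have "f x = 0"
      using \<sigma>(2) by (auto simp: simplex_points_def)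
    moreover have "\<sigma> \<in> induced K (- {x})"
      using \<sigma>(1) False by (auto simp: induced_def)
    ultimately show ?thesis
      using \<sigma>(2) by (auto simp: move_weight_unweighted topspace_geom_real)
  qed
qed

lemma move_weight_fixes_geom_real_delete:
  "f \<in> topspace (geom_real (induced K (- {x}))) \<Longrightarrow> move_weight x y t f = f"
  by (auto simp: topspace_geom_real induced_def simplex_points_def intro!: move_weight_unweighted)

lemma continuous_map_geom_real_iff:
  "continuous_map X (geom_real K) g \<longleftrightarrow>
     (\<forall>v. continuous_map X euclideanreal (\<lambda>p. g p v)) \<and> g \<in> topspace X \<rightarrow> topspace (geom_real K)"
  by (simp add: geom_real_def continuous_map_in_subtopology continuous_map_componentwise_UNIV)

lemma continuous_map_geom_real_coordinate:
  "continuous_map (geom_real K) euclideanreal (\<lambda>f. f v)"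
  unfolding geom_real_def
  by (intro continuous_map_from_subtopology continuous_map_product_projection) simp

lemma continuous_map_move_weight:
  "continuous_map (prod_topology (top_of_set {0..1}) (geom_real K)) euclideanreal
     (\<lambda>p. move_weight x y (fst p) (snd p) v)"
proof -
  have "continuous_map (prod_topology (top_of_set {0..1}) (geom_real K)) euclideanreal (\<lambda>p. snd p u)"
    for u
    using continuous_map_compose[OF continuous_map_snd continuous_map_geom_real_coordinate]
    by (simp add: o_def)
  moreover have "continuous_map (prod_topology (top_of_set {0..1}) (geom_real K)) euclideanreal fst"
    by (metis continuous_map_fst continuous_map_in_subtopology)
  ultimately show ?thesis
    unfolding move_weight_def by (intro continuous_intros)
qed

lemma geom_real_delete_dominated_vertex:
  assumes down: "\<And>\<sigma> \<tau>. \<sigma> \<in> K \<Longrightarrow> \<tau> \<subseteq> \<sigma> \<Longrightarrow> \<tau> \<in> K"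
    and "x \<noteq> y" and dom: "\<And>\<sigma>. \<sigma> \<in> K \<Longrightarrow> x \<in> \<sigma> \<Longrightarrow> insert y \<sigma> \<in> K"
  shows "geom_real K homotopy_equivalent_space geom_real (induced K (- {x}))"
proof -
  let ?K' = "induced K (- {x})" and ?r = "move_weight x y 1"
  have homotopy: "continuous_map (prod_topology (top_of_set {0..1}) (geom_real K)) (geom_real K)
      (\<lambda>p. move_weight x y (fst p) (snd p))"
    using move_weight_in_geom_real[OF \<open>x \<noteq> y\<close> dom]
    by (auto simp: continuous_map_geom_real_iff continuous_map_move_weight)
  have "continuous_map (geom_real K) (geom_real ?K') ?r"
  proof -
    have "continuous_map (geom_real K) (prod_topology (top_of_set {0..1}) (geom_real K))
        (Pair (1::real))"
      by (intro continuous_map_pairedI continuous_map_id) auto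
    from continuous_map_compose[OF this homotopy] show ?thesis
      using move_weight_1_in_geom_real_delete[OF down \<open>x \<noteq> y\<close> dom]
      by (auto simp: continuous_map_geom_real_iff o_def)
  qed
  moreover have "continuous_map (geom_real ?K') (geom_real K) id"
    by (auto simp: continuous_map_geom_real_iff continuous_map_geom_real_coordinate
        topspace_geom_real induced_def)
  moreover have "homotopic_with (\<lambda>_. True) (geom_real K) (geom_real K) id (id \<circ> ?r)"
    unfolding homotopic_with_def using homotopy
    by (intro exI[of _ "\<lambda>p. move_weight x y (fst p) (snd p)"]) auto
  ultimately show ?thesis
    using move_weight_fixes_geom_real_delete
    by (intro deformation_retraction_imp_homotopy_equivalent_space[of _ id ?r])
      (auto simp: retraction_maps_def homotopic_with_sym)
qed

definition flag_complex :: "('a \<Rightarrow> 'a \<Rightarrow> bool) \<Rightarrow> 'a set \<Rightarrow> 'a set set" where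
  "flag_complex A U = {\<tau>. \<tau> \<subseteq> U \<and> finite \<tau> \<and> (\<forall>a\<in>\<tau>. \<forall>b\<in>\<tau>. A a b)}"

lemma VR_eq_flag_complex: "VR X r = flag_complex (\<lambda>a b. manhattan a b \<le> r) X"
  by (simp add: VR_def flag_complex_def)

lemma link_flag_complex:
  assumes "v \<in> U" "A v v"
  shows "link (flag_complex A U) v = flag_complex A {u \<in> U - {v}. A v u \<and> A u v}"
  using assms by (auto simp: link_def flag_complex_def)

lemma vertices_flag_complex: "vertices (flag_complex A U) = {u \<in> U. A u u}"
  by (auto simp: vertices_def flag_complex_def)

lemma induced_flag_complex: "induced (flag_complex A U) W = flag_complex A (U \<inter> W)"
  by (auto simp: induced_def flag_complex_def)

lemma flag_complex_delete_dominated_vertex: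
  assumes "y \<in> U" "x \<noteq> y"
    and sym: "\<And>a b. a \<in> U \<Longrightarrow> b \<in> U \<Longrightarrow> A a b \<Longrightarrow> A b a"
    and dom: "\<And>z. z \<in> U \<Longrightarrow> A x z \<Longrightarrow> A y z"
  shows "geom_real (flag_complex A U) homotopy_equivalent_space geom_real (flag_complex A (U - {x}))"
proof -
  have down: "\<tau> \<in> flag_complex A U" if "\<sigma> \<in> flag_complex A U" "\<tau> \<subseteq> \<sigma>" for \<sigma> \<tau>
    using that by (auto simp: flag_complex_def finite_subset)
  have cone: "insert y \<sigma> \<in> flag_complex A U" if "\<sigma> \<in> flag_complex A U" "x \<in> \<sigma>" for \<sigma>
  proof -
    have \<sigma>: "\<sigma> \<subseteq> U" "finite \<sigma>" "\<And>a b. a \<in> \<sigma> \<Longrightarrow> b \<in> \<sigma> \<Longrightarrow> A a b"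
      using that(1) by (auto simp: flag_complex_def)
    have yz: "A y z" if "z \<in> \<sigma>" for z
      using dom \<sigma> that \<open>x \<in> \<sigma>\<close> by blast
    then have "A y y"
      using dom sym \<sigma>(1) \<open>x \<in> \<sigma>\<close> \<open>y \<in> U\<close> by blast
    then show ?thesis
      using yz sym \<sigma> \<open>y \<in> U\<close> by (auto simp: flag_complex_def)
  qed
  show ?thesis
    using geom_real_delete_dominated_vertex[OF down \<open>x \<noteq> y\<close> cone]
    by (simp add: induced_flag_complex Diff_eq)
qed

lemma flag_complex_delete_top_rank_vertex:
  fixes \<rho> :: "'a \<Rightarrow> nat"
  assumes sym: "\<And>a b. a \<in> N \<Longrightarrow> b \<in> N \<Longrightarrow> A a b \<Longrightarrow> A b a"
    and dom: "\<exists>y\<in>N. \<rho> y < \<rho> x \<and> (\<forall>z\<in>N. \<rho> z \<le> \<rho> x \<longrightarrow> A x z \<longrightarrow> A y z)"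
    and U: "U \<subseteq> N" "\<And>u v. u \<in> U \<Longrightarrow> v \<in> N \<Longrightarrow> \<rho> v < \<rho> u \<Longrightarrow> v \<in> U"
    and x: "x \<in> U" "\<And>u. u \<in> U \<Longrightarrow> \<rho> u \<le> \<rho> x"
  shows "geom_real (flag_complex A U) homotopy_equivalent_space geom_real (flag_complex A (U - {x}))"
proof -
  obtain y where y: "y \<in> N" "\<rho> y < \<rho> x" "\<forall>z\<in>N. \<rho> z \<le> \<rho> x \<longrightarrow> A x z \<longrightarrow> A y z"
    using dom by blast
  show ?thesis
  proof (rule flag_complex_delete_dominated_vertex)
    show "y \<in> U"
      using U(2) x(1) y(1,2) by blast
    show "x \<noteq> y"
      using y(2) by blast
    show "A b a" if "a \<in> U" "b \<in> U" "A a b" for a b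
      using sym that U(1) by blast
    show "A y z" if "z \<in> U" "A x z" for z
      using y(3) x(2) that U(1) by blast
  qed
qed

lemma flag_complex_rank_reduction_downward_closed:
  fixes \<rho> :: "'a \<Rightarrow> nat"
  assumes "finite U"
    and sym: "\<And>a b. a \<in> N \<Longrightarrow> b \<in> N \<Longrightarrow> A a b \<Longrightarrow> A b a"
    and dom: "\<And>x. x \<in> N \<Longrightarrow> 0 < \<rho> x \<Longrightarrow>
      \<exists>y\<in>N. \<rho> y < \<rho> x \<and> (\<forall>z\<in>N. \<rho> z \<le> \<rho> x \<longrightarrow> A x z \<longrightarrow> A y z)"
    and "U \<subseteq> N" "{x \<in> N. \<rho> x = 0} \<subseteq> U" "\<And>u v. u \<in> U \<Longrightarrow> v \<in> N \<Longrightarrow> \<rho> v < \<rho> u \<Longrightarrow> v \<in> U"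
  shows "geom_real (flag_complex A U) homotopy_equivalent_space
    geom_real (flag_complex A {x \<in> N. \<rho> x = 0})"
  using assms(1,4-6)
proof (induction U rule: finite_psubset_induct)
  case (psubset U)
  show ?case
  proof (cases "\<forall>u\<in>U. \<rho> u = 0")
    case True
    then have "U = {x \<in> N. \<rho> x = 0}"
      using psubset.prems(1,2) by auto
    then show ?thesis
      by (simp add: homotopy_equivalent_space_refl)
  next
    case False
    then obtain u where u: "u \<in> U" "0 < \<rho> u"
      by blast
    obtain t where t: "t \<in> U" "Max (\<rho> ` U) = \<rho> t"
      using obtains_MAX[OF psubset.hyps] u(1) by blast
    have top: "\<rho> z \<le> \<rho> t" if "z \<in> U" for z
      using t(2) that psubset.hyps by (metis Max_ge finite_imageI imageI)
    have "geom_real (flag_complex A U) homotopy_equivalent_space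
        geom_real (flag_complex A (U - {t}))"
    proof (rule flag_complex_delete_top_rank_vertex[where \<rho> = \<rho> and N = N, OF sym])
      show "\<exists>y\<in>N. \<rho> y < \<rho> t \<and> (\<forall>z\<in>N. \<rho> z \<le> \<rho> t \<longrightarrow> A t z \<longrightarrow> A y z)"
        using dom[of t] psubset.prems(1) t(1) top[OF u(1)] u(2) by auto
    qed (use psubset.prems t(1) top in auto)
    also have "geom_real (flag_complex A (U - {t})) homotopy_equivalent_space
        geom_real (flag_complex A {x \<in> N. \<rho> x = 0})"
    proof (rule psubset.IH)
      show "U - {t} \<subset> U" "U - {t} \<subseteq> N"
        using t(1) psubset.prems(1) by auto
      show "{x \<in> N. \<rho> x = 0} \<subseteq> U - {t}"
        using psubset.prems(2) top[OF u(1)] u(2) by auto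
      show "v \<in> U - {t}" if "w \<in> U - {t}" "v \<in> N" "\<rho> v < \<rho> w" for w v
        using psubset.prems(3) top that by (metis DiffE DiffI leD singletonD)
    qed
    finally show ?thesis .
  qed
qed

lemma flag_complex_rank_reduction:
  fixes \<rho> :: "'a \<Rightarrow> nat"
  assumes "finite N"
    and "\<And>a b. a \<in> N \<Longrightarrow> b \<in> N \<Longrightarrow> A a b \<Longrightarrow> A b a"
    and "\<And>x. x \<in> N \<Longrightarrow> 0 < \<rho> x \<Longrightarrow>
      \<exists>y\<in>N. \<rho> y < \<rho> x \<and> (\<forall>z\<in>N. \<rho> z \<le> \<rho> x \<longrightarrow> A x z \<longrightarrow> A y z)"
  shows "geom_real (flag_complex A N) homotopy_equivalent_space
    geom_real (flag_complex A {x \<in> N. \<rho> x = 0})"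
  using assms by (intro flag_complex_rank_reduction_downward_closed) auto

section \<open>Moving lattice points towards the origin\<close>

definition l1_norm :: "int list \<Rightarrow> int" where
  "l1_norm x = (\<Sum>i<length x. \<bar>x ! i\<bar>)"

lemma l1_norm_nonneg: "0 \<le> l1_norm x"
  by (simp add: l1_norm_def sum_nonneg)

lemma l1_norm_remove:
  "i < length x \<Longrightarrow> l1_norm x = \<bar>x ! i\<bar> + (\<Sum>k\<in>{..<length x} - {i}. \<bar>x ! k\<bar>)"
  by (simp add: l1_norm_def sum.remove)

lemma manhattan_self: "manhattan x x = 0"
  by (simp add: manhattan_def)

lemma manhattan_zero_left: "length y = n \<Longrightarrow> manhattan (replicate n 0) y = l1_norm y"
  by (simp add: manhattan_def l1_norm_def)

lemma manhattan_zero_right: "length y = n \<Longrightarrow> manhattan y (replicate n 0) = l1_norm y"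
  by (simp add: manhattan_def l1_norm_def)

lemma manhattan_commute: "length x = length z \<Longrightarrow> manhattan x z = manhattan z x"
  by (simp add: manhattan_def abs_minus_commute)

lemma even_manhattan_add_l1_norms:
  assumes "length x = length z"
  shows "even (manhattan x z + l1_norm x + l1_norm z)"
proof -
  have "manhattan x z + l1_norm x + l1_norm z =
      (\<Sum>k<length x. \<bar>x ! k - z ! k\<bar> + \<bar>x ! k\<bar> + \<bar>z ! k\<bar>)"
    using assms by (simp add: manhattan_def l1_norm_def sum.distrib)
  also have "even \<dots>"
    by (intro dvd_sum) (auto simp: abs_if)
  finally show ?thesis .
qed

lemma manhattan_le_l1_norms:
  assumes "length z = length x" "B \<subseteq> {..<length x}"
    and "\<And>k. k \<in> B \<Longrightarrow> \<bar>x ! k - z ! k\<bar> = \<bar>z ! k\<bar> - \<bar>x ! k\<bar>"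
  shows "manhattan x z \<le> l1_norm x + l1_norm z - 2 * (\<Sum>k\<in>B. \<bar>x ! k\<bar>)"
proof -
  have "manhattan x z \<le>
      (\<Sum>k<length x. \<bar>x ! k\<bar> + \<bar>z ! k\<bar> - (if k \<in> B then 2 * \<bar>x ! k\<bar> else 0))"
    unfolding manhattan_def using assms(3) by (intro sum_mono) auto
  also have "\<dots> = l1_norm x + l1_norm z - (\<Sum>k\<in>B. 2 * \<bar>x ! k\<bar>)"
    using assms(1,2)
    by (simp add: l1_norm_def sum_subtractf sum.distrib sum.If_cases Int_absorb1)
  finally show ?thesis
    by (simp add: sum_distrib_left)
qed

definition shrink :: "nat set \<Rightarrow> int list \<Rightarrow> int list" where
  "shrink S x = map (\<lambda>k. if k \<in> S then x ! k - sgn (x ! k) else x ! k) [0..<length x]"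

lemma length_shrink [simp]: "length (shrink S x) = length x"
  by (simp add: shrink_def)

lemma nth_shrink:
  "k < length x \<Longrightarrow> shrink S x ! k = (if k \<in> S then x ! k - sgn (x ! k) else x ! k)"
  by (simp add: shrink_def)

lemma abs_diff_sgn: "a \<noteq> 0 \<Longrightarrow> \<bar>a - sgn a\<bar> = \<bar>a\<bar> - (1::int)"
  by (auto simp: sgn_if abs_if)

lemma dist_diff_sgn_cases:
  fixes a b :: int
  assumes "a \<noteq> 0"
  shows "\<bar>(a - sgn a) - b\<bar> = \<bar>a - b\<bar> - 1 \<or>
    (\<bar>(a - sgn a) - b\<bar> = \<bar>a - b\<bar> + 1 \<and> \<bar>a - b\<bar> = \<bar>b\<bar> - \<bar>a\<bar>)"
  using assms by (cases "a > 0") (auto simp: sgn_if abs_if)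

lemma manhattan_shrink:
  assumes "S \<subseteq> {..<length x}"
  shows "manhattan (shrink S x) z =
    manhattan x z + (\<Sum>k\<in>S. \<bar>(x ! k - sgn (x ! k)) - z ! k\<bar> - \<bar>x ! k - z ! k\<bar>)"
proof -
  have "manhattan (shrink S x) z - manhattan x z =
      (\<Sum>k<length x. \<bar>shrink S x ! k - z ! k\<bar> - \<bar>x ! k - z ! k\<bar>)"
    by (simp add: manhattan_def sum_subtractf)
  also have "\<dots> = (\<Sum>k\<in>S. \<bar>(x ! k - sgn (x ! k)) - z ! k\<bar> - \<bar>x ! k - z ! k\<bar>)"
    using assms by (intro sum.mono_neutral_cong_right) (auto simp: nth_shrink)
  finally show ?thesis by simp
qed

lemma l1_norm_shrink:
  assumes "S \<subseteq> {k. k < length x \<and> x ! k \<noteq> 0}"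
  shows "l1_norm (shrink S x) = l1_norm x - int (card S)"
proof -
  have "l1_norm (shrink S x) - l1_norm x = (\<Sum>k<length x. \<bar>shrink S x ! k\<bar> - \<bar>x ! k\<bar>)"
    by (simp add: l1_norm_def sum_subtractf)
  also have "\<dots> = (\<Sum>k\<in>S. - 1)"
    using assms by (intro sum.mono_neutral_cong_right) (auto simp: nth_shrink abs_diff_sgn)
  finally show ?thesis by simp
qed

lemma l1_norm_shrink_le: "l1_norm (shrink S x) \<le> l1_norm x"
  unfolding l1_norm_def length_shrink by (intro sum_mono) (auto simp: nth_shrink sgn_if)

text \<open>A step in coordinate \<open>k\<close> moves away from \<open>z\<close> only if \<open>z\<close> lies beyond \<open>x\<close> in that
  coordinate. If this happens in all moved coordinates, then \<open>x\<close> and \<open>z\<close> were already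
  close, because the moved coordinates carry enough of the norm of \<open>x\<close>; otherwise one step
  moves towards \<open>z\<close> and compensates for the (at most one) other.\<close>
lemma manhattan_shrink_le:
  assumes S: "S \<subseteq> {k. k < length x \<and> x ! k \<noteq> 0}" "card S \<le> 2"
    and heavy: "l1_norm x + int (card S) \<le> 2 * (\<Sum>k\<in>S. \<bar>x ! k\<bar>)"
    and z: "length z = length x" "l1_norm z \<le> r" "manhattan x z \<le> r"
  shows "manhattan (shrink S x) z \<le> r"
proof -
  define d where "d k = \<bar>(x ! k - sgn (x ! k)) - z ! k\<bar> - \<bar>x ! k - z ! k\<bar>" for k
  have fin: "finite S"
    using S(1) by (rule finite_subset) simp
  have m: "manhattan (shrink S x) z = manhattan x z + sum d S"
    using S(1) manhattan_shrink[of S x z] by (auto simp: d_def)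
  have d: "d k = -1 \<or> (d k = 1 \<and> \<bar>x ! k - z ! k\<bar> = \<bar>z ! k\<bar> - \<bar>x ! k\<bar>)" if "k \<in> S" for k
    using dist_diff_sgn_cases[of "x ! k" "z ! k"] S(1) that by (auto simp: d_def)
  show ?thesis
  proof (cases "\<forall>k\<in>S. d k = 1")
    case True
    then have "manhattan x z \<le> l1_norm x + l1_norm z - 2 * (\<Sum>k\<in>S. \<bar>x ! k\<bar>)"
      using d S(1) z(1) by (intro manhattan_le_l1_norms) auto
    moreover have "sum d S = int (card S)"
      using True by simp
    ultimately show ?thesis
      using m heavy z(2) by linarith
  next
    case False
    then obtain k where k: "k \<in> S" "d k = -1"
      using d by blast
    have "sum d (S - {k}) \<le> int (card (S - {k}))"
      using sum_bounded_above[of "S - {k}" d 1] d by fastforce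
    then have "sum d S \<le> 0"
      using k fin S(2) sum.remove[OF fin k(1), of d] by (simp add: card_Diff_singleton)
    then show ?thesis
      using m z(3) by linarith
  qed
qed

definition antilex_pos :: "int list \<Rightarrow> bool" where
  "antilex_pos x \<longleftrightarrow> antilex (replicate (length x) 0) x"

lemma antilex_pos_iff:
  "antilex_pos x \<longleftrightarrow> (\<exists>L<length x. 0 < x ! L \<and> (\<forall>j. L < j \<and> j < length x \<longrightarrow> x ! j = 0))"
  by (auto simp: antilex_pos_def antilex_def)

lemma antilex_pos_nonzero: "antilex_pos y \<Longrightarrow> y \<noteq> replicate n 0"
  by (auto simp: antilex_pos_iff)

lemma antilex_iff_antilex_pos_diff:
  "length d = length h \<Longrightarrow> antilex d h \<longleftrightarrow> antilex_pos (map2 (-) h d)"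
  by (auto simp: antilex_def antilex_pos_iff)

text \<open>The coordinates that can be moved one step towards 0 without destroying
  \<^const>\<open>antilex_pos\<close>.\<close>
definition shrinkable :: "int list \<Rightarrow> nat set" where
  "shrinkable x = {k. k < length x \<and> x ! k \<noteq> 0 \<and>
     (x ! k = 1 \<longrightarrow> (\<exists>j. k < j \<and> j < length x \<and> x ! j \<noteq> 0))}"

lemma shrinkable_subset: "shrinkable x \<subseteq> {k. k < length x \<and> x ! k \<noteq> 0}"
  by (auto simp: shrinkable_def)

lemma finite_shrinkable: "finite (shrinkable x)"
  by (rule finite_subset[of _ "{..<length x}"]) (auto simp: shrinkable_def)

lemma shrinkable_if_abs_ge_2: "k < length x \<Longrightarrow> 2 \<le> \<bar>x ! k\<bar> \<Longrightarrow> k \<in> shrinkable x"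
  by (auto simp: shrinkable_def)

lemma antilex_pos_shrink:
  assumes "antilex_pos x" "S \<subseteq> shrinkable x"
  shows "antilex_pos (shrink S x)"
proof -
  obtain L where L: "L < length x" "0 < x ! L" "\<forall>j. L < j \<and> j < length x \<longrightarrow> x ! j = 0"
    using assms(1) by (auto simp: antilex_pos_iff)
  have "L \<in> S \<Longrightarrow> x ! L \<noteq> 1"
    using assms(2) L(3) by (force simp: shrinkable_def)
  then have "0 < shrink S x ! L"
    using L(1,2) by (auto simp: nth_shrink)
  moreover have "shrink S x ! j = 0" if "L < j" "j < length x" for j
    using L(3) that by (simp add: nth_shrink)
  ultimately show ?thesis
    using L(1) by (auto simp: antilex_pos_iff)
qed

lemma sum_abs_unshrinkable_le_1:
  assumes "K \<subseteq> {..<length x} - shrinkable x"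
  shows "(\<Sum>k\<in>K. \<bar>x ! k\<bar>) \<le> 1"
proof -
  let ?K = "{k \<in> K. x ! k \<noteq> 0}"
  have K: "x ! k = 1" "\<forall>j. k < j \<and> j < length x \<longrightarrow> x ! j = 0" if "k \<in> ?K" for k
    using assms that by (auto simp: shrinkable_def)
  have len: "k < length x" if "k \<in> ?K" for k
    using assms that by auto
  have fin: "finite K"
    using assms finite_subset by blast
  have "a = b" if "a \<in> ?K" "b \<in> ?K" for a b
  proof (rule ccontr)
    assume "a \<noteq> b"
    then consider "a < b" | "b < a" by linarith
    then show False
    proof cases
      case 1
      then show False using K(2)[OF that(1)] len[OF that(2)] that(2) by auto
    next
      case 2
      then show False using K(2)[OF that(2)] len[OF that(1)] that(1) by auto
    qed
  qed
  then have "card ?K \<le> 1"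
    using fin by (simp add: card_le_Suc0_iff_eq)
  have "(\<Sum>k\<in>K. \<bar>x ! k\<bar>) = (\<Sum>k\<in>?K. \<bar>x ! k\<bar>)"
    using fin by (intro sum.mono_neutral_right) auto
  also have "\<dots> = (\<Sum>k\<in>?K. 1)"
    by (rule sum.cong[OF refl]) (metis K(1) abs_one)
  finally show ?thesis
    using \<open>card ?K \<le> 1\<close> by simp
qed

section \<open>Core points, spike points and their ranks\<close>

definition core_point :: "int \<Rightarrow> int list \<Rightarrow> bool" where
  "core_point r x \<longleftrightarrow> (\<forall>i<length x. \<bar>x ! i\<bar> < r div 2) \<and>
     (\<forall>j<length x. \<forall>k<length x. j \<noteq> k \<longrightarrow> \<bar>x ! j\<bar> + \<bar>x ! k\<bar> \<le> r - r div 2)"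

definition spike_point :: "int \<Rightarrow> int list \<Rightarrow> bool" where
  "spike_point r x \<longleftrightarrow> odd r \<and> l1_norm x = r \<and>
     (\<exists>i<length x. \<bar>x ! i\<bar> = r div 2 \<and> (\<forall>j<length x. j \<noteq> i \<longrightarrow> \<bar>x ! j\<bar> \<le> 1))"

definition collapse_rank :: "int \<Rightarrow> int list \<Rightarrow> nat" where
  "collapse_rank r x =
     (if core_point r x then 0 else if spike_point r x then 1 else nat (l1_norm x) + 2)"

lemma collapse_rank_eq_0_iff [simp]: "collapse_rank r x = 0 \<longleftrightarrow> core_point r x"
  by (simp add: collapse_rank_def)

lemma floor_half: "\<lfloor>real_of_int r / 2\<rfloor> = r div 2"
  using floor_divide_of_int_eq[of r 2] by simp

lemma ceiling_half: "\<lceil>real_of_int r / 2\<rceil> = r - r div 2"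
proof -
  have "\<lceil>real_of_int r / 2\<rceil> = - ((- r) div 2)"
    using floor_divide_of_int_eq[of "- r" 2] by (simp add: ceiling_def)
  also have "\<dots> = r - r div 2"
    by presburger
  finally show ?thesis .
qed

lemma core_point_iff_floor_ceiling:
  "length x = n \<Longrightarrow> core_point r x \<longleftrightarrow>
     (\<forall>i<n. \<bar>x ! i\<bar> < \<lfloor>real_of_int r / 2\<rfloor>) \<and>
     (\<forall>j<n. \<forall>k<n. j \<noteq> k \<longrightarrow> \<bar>x ! j\<bar> + \<bar>x ! k\<bar> \<le> \<lceil>real_of_int r / 2\<rceil>)"
  by (simp add: core_point_def floor_half ceiling_half)

lemma core_point_shrink_spike:
  assumes "4 \<le> r" "odd r" "i < length x" "\<bar>x ! i\<bar> = r div 2"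
    and rest: "\<And>j. j < length x \<Longrightarrow> j \<noteq> i \<Longrightarrow> \<bar>x ! j\<bar> \<le> 1"
  shows "core_point r (shrink {i} x)"
proof -
  define f where "f = r div 2"
  have f: "r = 2 * f + 1" "2 \<le> f"
    using assms(1,2) by (auto simp: f_def elim!: oddE)
  have "x ! i \<noteq> 0"
    using assms(1,4) by auto
  then have yi: "\<bar>shrink {i} x ! i\<bar> = f - 1"
    using assms(3,4) by (simp add: nth_shrink abs_diff_sgn f_def)
  have yj: "\<bar>shrink {i} x ! j\<bar> \<le> 1" if "j < length x" "j \<noteq> i" for j
    using that rest by (simp add: nth_shrink)
  show ?thesis
    unfolding core_point_def f_def[symmetric]
  proof (intro conjI allI impI)
    show "\<bar>shrink {i} x ! k\<bar> < f" if "k < length (shrink {i} x)" for k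
      using that yi yj[of k] f by (cases "k = i") auto
    show "\<bar>shrink {i} x ! j\<bar> + \<bar>shrink {i} x ! k\<bar> \<le> r - f"
      if "j < length (shrink {i} x)" "k < length (shrink {i} x)" "j \<noteq> k" for j k
      using that yi yj[of j] yj[of k] f by (cases "j = i"; cases "k = i") auto
  qed
qed

text \<open>The step can only move away from \<open>z\<close> if \<open>z\<close> is a spike point beyond \<open>x\<close> in the long
  coordinate; then \<open>manhattan x z\<close> is even by parity, hence at most \<open>r - 1\<close>.\<close>
lemma manhattan_shrink_spike_le:
  assumes "spike_point r x" "i < length x" "\<bar>x ! i\<bar> = r div 2" "4 \<le> r"
    and z: "length z = length x" "core_point r z \<or> spike_point r z" "manhattan x z \<le> r"
  shows "manhattan (shrink {i} x) z \<le> r"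
proof -
  have r: "odd r" "l1_norm x = r"
    using assms(1) by (auto simp: spike_point_def)
  have "x ! i \<noteq> 0"
    using assms(3,4) by auto
  from dist_diff_sgn_cases[OF this, of "z ! i"]
  consider "\<bar>(x ! i - sgn (x ! i)) - z ! i\<bar> = \<bar>x ! i - z ! i\<bar> - 1"
    | "\<bar>(x ! i - sgn (x ! i)) - z ! i\<bar> = \<bar>x ! i - z ! i\<bar> + 1"
      "\<bar>x ! i - z ! i\<bar> = \<bar>z ! i\<bar> - \<bar>x ! i\<bar>"
    by blast
  moreover have m: "manhattan (shrink {i} x) z =
      manhattan x z + (\<bar>(x ! i - sgn (x ! i)) - z ! i\<bar> - \<bar>x ! i - z ! i\<bar>)"
    using manhattan_shrink[of "{i}" x z] assms(2) by simp
  ultimately show ?thesis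
  proof cases
    case 1
    then show ?thesis using m z(3) by simp
  next
    case 2
    then have "r div 2 \<le> \<bar>z ! i\<bar>"
      using assms(3) by linarith
    then have "\<not> core_point r z"
      using assms(2) z(1) by (auto simp: core_point_def)
    then have "l1_norm z = r"
      using z(2) by (simp add: spike_point_def)
    then have "even (manhattan x z)"
      using even_manhattan_add_l1_norms[of x z] z(1) r(2) by simp
    then have "manhattan x z \<le> r - 1"
      using z(3) r(1) by (metis le_less zle_diff1_eq)
    then show ?thesis
      using m 2 by simp
  qed
qed

lemma exists_shrinkable_other:
  assumes "i < length x" "\<bar>x ! i\<bar> + 2 \<le> l1_norm x"
  obtains j where "j \<in> shrinkable x" "j \<noteq> i"
proof (rule ccontr)
  assume "\<not> thesis"
  then have "{..<length x} - {i} \<subseteq> {..<length x} - shrinkable x"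
    using that by blast
  then have "(\<Sum>k\<in>{..<length x} - {i}. \<bar>x ! k\<bar>) \<le> 1"
    by (rule sum_abs_unshrinkable_le_1)
  then show False
    using l1_norm_remove[OF assms(1)] assms(2) by linarith
qed

lemma long_coordinate_partner:
  assumes "l1_norm x \<le> r" "4 \<le> r" "\<not> spike_point r x"
    and i: "i < length x" "r div 2 \<le> \<bar>x ! i\<bar>" and "2 * \<bar>x ! i\<bar> \<le> l1_norm x"
  obtains j where "j \<in> shrinkable x" "j \<noteq> i" "l1_norm x + 2 \<le> 2 * (\<bar>x ! i\<bar> + \<bar>x ! j\<bar>)"
proof -
  define f where "f = r div 2"
  have f: "2 * f \<le> r" "r \<le> 2 * f + 1" "2 \<le> f" "f \<le> \<bar>x ! i\<bar>"
    using assms(2) i(2) by (auto simp: f_def)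
  consider "l1_norm x = 2 * \<bar>x ! i\<bar>" | "l1_norm x = r" "r = 2 * f + 1" "\<bar>x ! i\<bar> = f"
    using assms(1,6) f by linarith
  then show ?thesis
  proof cases
    case 1
    then obtain j where j: "j \<in> shrinkable x" "j \<noteq> i"
      using exists_shrinkable_other[OF i(1)] f(3,4) by force
    then have "x ! j \<noteq> 0"
      by (simp add: shrinkable_def)
    then have "l1_norm x + 2 \<le> 2 * (\<bar>x ! i\<bar> + \<bar>x ! j\<bar>)"
      using 1 by presburger
    then show ?thesis
      using that[OF j] by blast
  next
    case 2
    have "\<exists>j<length x. j \<noteq> i \<and> 2 \<le> \<bar>x ! j\<bar>"
    proof (rule ccontr)
      assume "\<not> ?thesis"
      moreover have "odd r"
        using \<open>r = 2 * f + 1\<close> by presburger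
      ultimately have "spike_point r x"
        using 2 i(1) unfolding spike_point_def f_def by force
      then show False
        using assms(3) by simp
    qed
    then obtain j where j: "j < length x" "j \<noteq> i" "2 \<le> \<bar>x ! j\<bar>"
      by blast
    then have "l1_norm x + 2 \<le> 2 * (\<bar>x ! i\<bar> + \<bar>x ! j\<bar>)"
      using 2 by presburger
    then show ?thesis
      using that[of j] shrinkable_if_abs_ge_2[OF j(1,3)] j(2) by blast
  qed
qed

lemma exists_heavy_shrinkable_set:
  assumes "l1_norm x \<le> r" "4 \<le> r" "\<not> core_point r x" "\<not> spike_point r x"
  obtains S where "S \<subseteq> shrinkable x" "S \<noteq> {}" "card S \<le> 2"
    "l1_norm x + int (card S) \<le> 2 * (\<Sum>k\<in>S. \<bar>x ! k\<bar>)"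
proof (cases "\<exists>i<length x. r div 2 \<le> \<bar>x ! i\<bar>")
  case True
  then obtain i where i: "i < length x" "r div 2 \<le> \<bar>x ! i\<bar>"
    by blast
  have si: "i \<in> shrinkable x"
    using i assms(2) by (intro shrinkable_if_abs_ge_2) auto
  show ?thesis
  proof (cases "l1_norm x + 1 \<le> 2 * \<bar>x ! i\<bar>")
    case True
    then show ?thesis
      using that[of "{i}"] si by simp
  next
    case False
    then obtain j where "j \<in> shrinkable x" "j \<noteq> i" "l1_norm x + 2 \<le> 2 * (\<bar>x ! i\<bar> + \<bar>x ! j\<bar>)"
      using long_coordinate_partner[OF assms(1,2,4) i] by force
    then show ?thesis
      using that[of "{i, j}"] si by auto
  qed
next
  case False
  then have small: "\<bar>x ! k\<bar> < r div 2" if "k < length x" for k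
    using that by auto
  then obtain j k where jk: "j < length x" "k < length x" "j \<noteq> k"
    "r - r div 2 < \<bar>x ! j\<bar> + \<bar>x ! k\<bar>"
    using assms(3) by (auto simp: core_point_def not_le)
  then have "2 \<le> \<bar>x ! j\<bar>" "2 \<le> \<bar>x ! k\<bar>"
    using small[of j] small[of k] assms(2) by linarith+
  moreover have "l1_norm x + 2 \<le> 2 * (\<bar>x ! j\<bar> + \<bar>x ! k\<bar>)"
    using jk(4) assms(1) by presburger
  ultimately show ?thesis
    using that[of "{j, k}"] jk(1-3) shrinkable_if_abs_ge_2 by auto
qed

lemma exists_dominating_shrink:
  assumes "l1_norm x \<le> r" "4 \<le> r" "\<not> core_point r x"
  obtains S where "S \<subseteq> shrinkable x" "collapse_rank r (shrink S x) < collapse_rank r x"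
    "\<And>z. length z = length x \<Longrightarrow> l1_norm z \<le> r \<Longrightarrow> collapse_rank r z \<le> collapse_rank r x \<Longrightarrow>
       manhattan x z \<le> r \<Longrightarrow> manhattan (shrink S x) z \<le> r"
proof (cases "spike_point r x")
  case True
  then obtain i where i: "i < length x" "\<bar>x ! i\<bar> = r div 2"
    and rest: "\<And>j. j < length x \<Longrightarrow> j \<noteq> i \<Longrightarrow> \<bar>x ! j\<bar> \<le> 1" and "odd r"
    by (auto simp: spike_point_def)
  have "i \<in> shrinkable x"
    using i assms(2) by (intro shrinkable_if_abs_ge_2) auto
  moreover have "collapse_rank r (shrink {i} x) < collapse_rank r x"
    using core_point_shrink_spike[OF assms(2) \<open>odd r\<close> i rest] True assms(3)
    by (simp add: collapse_rank_def)
  moreover have "core_point r z \<or> spike_point r z" if "collapse_rank r z \<le> collapse_rank r x" for z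
    using that True assms(3) by (auto simp: collapse_rank_def split: if_splits)
  ultimately show ?thesis
    using that[of "{i}"] manhattan_shrink_spike_le[OF True i assms(2)] by blast
next
  case False
  obtain S where S: "S \<subseteq> shrinkable x" "S \<noteq> {}" "card S \<le> 2"
    and heavy: "l1_norm x + int (card S) \<le> 2 * (\<Sum>k\<in>S. \<bar>x ! k\<bar>)"
    using exists_heavy_shrinkable_set[OF assms False] .
  have S': "S \<subseteq> {k. k < length x \<and> x ! k \<noteq> 0}"
    using S(1) shrinkable_subset by (rule subset_trans)
  have "0 < card S"
    using S(2) finite_subset[OF S(1) finite_shrinkable] by (simp add: card_gt_0_iff)
  then have "l1_norm (shrink S x) < l1_norm x"
    using l1_norm_shrink[OF S'] by simp
  then have "collapse_rank r (shrink S x) < collapse_rank r x"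
    using l1_norm_nonneg[of "shrink S x"] False assms(3) by (auto simp: collapse_rank_def)
  moreover have "manhattan (shrink S x) z \<le> r"
    if "length z = length x" "l1_norm z \<le> r" "manhattan x z \<le> r" for z
    using manhattan_shrink_le[OF S' S(3) heavy that] .
  ultimately show ?thesis
    using that S(1) by blast
qed

section \<open>The vertex set of \<open>\<Gamma>\<close>\<close>

lemma antilex_irrefl: "\<not> antilex x x"
  by (auto simp: antilex_def)

lemma antilex_trans:
  assumes "antilex x y" "antilex y z"
  shows "antilex x z"
proof -
  obtain i where i: "i < length x" "x ! i < y ! i" "\<forall>j. i < j \<and> j < length x \<longrightarrow> x ! j = y ! j"
    and xy: "length x = length y"
    using assms(1) by (auto simp: antilex_def)
  obtain k where k: "k < length y" "y ! k < z ! k" "\<forall>j. k < j \<and> j < length y \<longrightarrow> y ! j = z ! j"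
    and yz: "length y = length z"
    using assms(2) by (auto simp: antilex_def)
  show ?thesis
  proof (cases i k rule: linorder_cases)
    case less
    then show ?thesis
      unfolding antilex_def using i k xy yz by (intro conjI exI[of _ k]) auto
  next
    case equal
    then show ?thesis
      unfolding antilex_def using i k xy yz by (intro conjI exI[of _ i]) auto
  next
    case greater
    then show ?thesis
      unfolding antilex_def using i k xy yz by (intro conjI exI[of _ i]) auto
  qed
qed

lemma antilex_total:
  assumes "length x = length y" "x \<noteq> y"
  shows "antilex x y \<or> antilex y x"
proof -
  let ?D = "{k. k < length x \<and> x ! k \<noteq> y ! k}"
  have "?D \<noteq> {}"
    using assms nth_equalityI by blast
  then have i: "Max ?D \<in> ?D"
    by (intro Max_in) simp_all
  have "x ! j = y ! j" if "Max ?D < j" "j < length x" for j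
    using that Max_ge[of ?D j] by fastforce
  then show ?thesis
    using i assms(1) unfolding antilex_def by (metis (mono_tags, lifting) linorder_neqE mem_Collect_eq)
qed

lemma finite_strict_total_order_has_least:
  assumes "finite S" "S \<noteq> {}"
    and trans: "\<And>x y z. R x y \<Longrightarrow> R y z \<Longrightarrow> R x z"
    and total: "\<And>x y. x \<in> S \<Longrightarrow> y \<in> S \<Longrightarrow> x \<noteq> y \<Longrightarrow> R x y \<or> R y x"
  shows "\<exists>d\<in>S. \<forall>y\<in>S. y \<noteq> d \<longrightarrow> R d y"
  using assms(1,2) total
proof (induction S rule: finite_ne_induct)
  case (singleton x)
  then show ?case by simp
next
  case (insert x F)
  then obtain d where d: "d \<in> F" "\<forall>y\<in>F. y \<noteq> d \<longrightarrow> R d y"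
    by blast
  show ?case
  proof (cases "R x d")
    case True
    have "R x y" if "y \<in> F" for y
      using True d(2) that trans[of x d y] by auto
    then show ?thesis by blast
  next
    case False
    then have "R d x"
      using insert.prems[of d x] d(1) insert.hyps by auto
    then show ?thesis using d by blast
  qed
qed

lemma cube_eq_lists: "cube n m = {xs. set xs \<subseteq> {0..int m} \<and> length xs = n}"
  by (auto simp: cube_def in_set_conv_nth subset_iff)

lemma finite_cube: "finite (cube n m)"
  unfolding cube_eq_lists by (rule finite_lists_length_eq) simp

lemma card_cube: "card (cube n m) = (m + 1) ^ n"
  unfolding cube_eq_lists by (simp add: card_lists_length_eq nat_add_distrib)

lemma antilex_replicate_top:
  assumes "y \<in> cube n m" "y \<noteq> replicate n (int m)"
  shows "antilex y (replicate n (int m))"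
proof -
  have "\<not> antilex (replicate n (int m)) y"
    using assms(1) by (auto simp: antilex_def cube_def)
  then show ?thesis
    using antilex_total[of y "replicate n (int m)"] assms by (auto simp: cube_def)
qed

lemma replicate_top_in_Hset:
  assumes "\<alpha> < (m + 1) ^ n"
  shows "replicate n (int m) \<in> Hset n m \<alpha>"
proof -
  let ?t = "replicate n (int m)"
  have t: "?t \<in> cube n m"
    by (simp add: cube_def)
  have "{y \<in> cube n m. antilex y ?t} = cube n m - {?t}"
    using antilex_replicate_top antilex_irrefl by blast
  then have "card {y \<in> cube n m. antilex y ?t} = (m + 1) ^ n - 1"
    using t finite_cube by (simp add: card_Diff_singleton card_cube)
  then show ?thesis
    using t assms by (simp add: Hset_def)
qed

lemma delta_least:
  assumes "\<alpha> < (m + 1) ^ n"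
  shows "delta n m \<alpha> \<in> Hset n m \<alpha>"
    and "\<And>h. h \<in> Hset n m \<alpha> \<Longrightarrow> h \<noteq> delta n m \<alpha> \<Longrightarrow> antilex (delta n m \<alpha>) h"
proof -
  have "\<exists>d\<in>Hset n m \<alpha>. \<forall>y\<in>Hset n m \<alpha>. y \<noteq> d \<longrightarrow> antilex d y"
  proof (rule finite_strict_total_order_has_least)
    show "finite (Hset n m \<alpha>)"
      using finite_cube by (simp add: Hset_def)
    show "Hset n m \<alpha> \<noteq> {}"
      using replicate_top_in_Hset[OF assms] by blast
    show "antilex x y \<or> antilex y x" if "x \<in> Hset n m \<alpha>" "y \<in> Hset n m \<alpha>" "x \<noteq> y" for x y
      using that antilex_total by (auto simp: Hset_def cube_def)
  qed (rule antilex_trans)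
  then obtain d where d: "d \<in> Hset n m \<alpha>" "\<forall>y\<in>Hset n m \<alpha>. y \<noteq> d \<longrightarrow> antilex d y"
    by blast
  have uniq: "e = d" if "e \<in> Hset n m \<alpha> \<and> (\<forall>y\<in>Hset n m \<alpha>. y \<noteq> e \<longrightarrow> antilex e y)" for e
  proof (rule ccontr)
    assume "e \<noteq> d"
    then have "antilex d e" "antilex e d"
      using that d by auto
    then show False
      using antilex_trans antilex_irrefl by metis
  qed
  have "delta n m \<alpha> = d"
    unfolding delta_def
  proof (rule the_equality)
    show "d \<in> Hset n m \<alpha> \<and> (\<forall>y\<in>Hset n m \<alpha>. y \<noteq> d \<longrightarrow> antilex d y)"
      using d by blast
  qed (rule uniq)
  then show "delta n m \<alpha> \<in> Hset n m \<alpha>"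
    and "\<And>h. h \<in> Hset n m \<alpha> \<Longrightarrow> h \<noteq> delta n m \<alpha> \<Longrightarrow> antilex (delta n m \<alpha>) h"
    using d by auto
qed

lemma Hset_antilex_upward_closed:
  assumes "d \<in> Hset n m \<alpha>" "h \<in> cube n m" "antilex d h"
  shows "h \<in> Hset n m \<alpha>"
proof -
  have "{z \<in> cube n m. antilex z d} \<subseteq> {z \<in> cube n m. antilex z h}"
    using assms(3) antilex_trans by blast
  then have "card {z \<in> cube n m. antilex z d} \<le> card {z \<in> cube n m. antilex z h}"
    using finite_cube by (intro card_mono) auto
  then show ?thesis
    using assms(1,2) by (simp add: Hset_def)
qed

lemma Hset_eq:
  assumes "\<alpha> < (m + 1) ^ n"
  shows "Hset n m \<alpha> = {h \<in> cube n m. h = delta n m \<alpha> \<or> antilex (delta n m \<alpha>) h}"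
  using delta_least[OF assms] Hset_antilex_upward_closed[OF delta_least(1)[OF assms]]
  by (auto simp: Hset_def)

lemma map2_diff_add_cancel: "length h = length d \<Longrightarrow> map2 (-) (map2 (+) h d) d = (h :: int list)"
  by (auto intro: nth_equalityI)

lemma map2_add_diff_cancel: "length h = length d \<Longrightarrow> map2 (+) (map2 (-) h d) d = (h :: int list)"
  by (auto intro: nth_equalityI)

lemma map2_diff_self: "map2 (-) d d = replicate (length d) (0 :: int)"
  by (auto intro: nth_equalityI)

lemma Yset_eq:
  assumes "\<alpha> < (m + 1) ^ n"
  shows "Yset n m \<alpha> = insert (replicate n 0)
    {y. length y = n \<and> antilex_pos y \<and> map2 (+) y (delta n m \<alpha>) \<in> cube n m}"
proof -
  let ?d = "delta n m \<alpha>"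
  have d: "?d \<in> cube n m" "length ?d = n"
    using delta_least(1)[OF assms] by (auto simp: Hset_def cube_def)
  have len: "h \<in> cube n m \<Longrightarrow> length h = n" for h
    by (simp add: cube_def)
  show ?thesis
  proof (intro equalityI subsetI)
    fix y assume "y \<in> Yset n m \<alpha>"
    then obtain h where h: "h \<in> cube n m" "h = ?d \<or> antilex ?d h" "y = map2 (-) h ?d"
      by (auto simp: Yset_def Hset_eq[OF assms])
    then show "y \<in> insert (replicate n 0)
        {y. length y = n \<and> antilex_pos y \<and> map2 (+) y ?d \<in> cube n m}"
      using d len[OF h(1)] antilex_iff_antilex_pos_diff[of ?d h]
      by (auto simp: map2_add_diff_cancel map2_diff_self)
  next
    fix y assume "y \<in> insert (replicate n 0)
        {y. length y = n \<and> antilex_pos y \<and> map2 (+) y ?d \<in> cube n m}"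
    then have "\<exists>h \<in> Hset n m \<alpha>. y = map2 (-) h ?d"
      using d antilex_iff_antilex_pos_diff[of ?d "map2 (+) y ?d"]
      by (auto simp: Hset_eq[OF assms] map2_diff_add_cancel map2_diff_self
          intro!: bexI[of _ ?d] bexI[of _ "map2 (+) y ?d"])
    then show "y \<in> Yset n m \<alpha>"
      by (auto simp: Yset_def)
  qed
qed

definition Gamma_vertex_set :: "nat \<Rightarrow> nat \<Rightarrow> nat \<Rightarrow> int \<Rightarrow> int list set" where
  "Gamma_vertex_set n m \<alpha> r =
     {y. length y = n \<and> antilex_pos y \<and> map2 (+) y (delta n m \<alpha>) \<in> cube n m \<and> l1_norm y \<le> r}"

lemma Gamma_eq_flag_complex:
  assumes "\<alpha> < (m + 1) ^ n" "0 \<le> r"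
  shows "Gamma n m \<alpha> r = flag_complex (\<lambda>a b. manhattan a b \<le> r) (Gamma_vertex_set n m \<alpha> r)"
proof -
  let ?Y = "Yset n m \<alpha>" and ?o = "replicate n (0::int)"
  have "Gamma n m \<alpha> r = flag_complex (\<lambda>a b. manhattan a b \<le> r)
      {u \<in> ?Y - {?o}. manhattan ?o u \<le> r \<and> manhattan u ?o \<le> r}"
    unfolding Gamma_def VR_eq_flag_complex
    using assms by (intro link_flag_complex) (auto simp: Yset_eq manhattan_def)
  also have "{u \<in> ?Y - {?o}. manhattan ?o u \<le> r \<and> manhattan u ?o \<le> r} = Gamma_vertex_set n m \<alpha> r"
    using assms(1) antilex_pos_nonzero
    by (auto simp: Yset_eq Gamma_vertex_set_def manhattan_zero_left manhattan_zero_right)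
  finally show ?thesis .
qed

lemma finite_Gamma_vertex_set:
  assumes "\<alpha> < (m + 1) ^ n"
  shows "finite (Gamma_vertex_set n m \<alpha> r)"
proof -
  have "finite (Yset n m \<alpha>)"
    using finite_cube by (simp add: Yset_def Hset_def)
  moreover have "Gamma_vertex_set n m \<alpha> r \<subseteq> Yset n m \<alpha>"
    using assms by (auto simp: Yset_eq Gamma_vertex_set_def)
  ultimately show ?thesis
    by (rule finite_subset[rotated])
qed

lemma shrink_add_in_cube:
  assumes "map2 (+) x d \<in> cube n m" "d \<in> cube n m"
  shows "map2 (+) (shrink S x) d \<in> cube n m"
proof -
  have len: "length d = n" "n \<le> length x"
    using assms by (auto simp: cube_def)
  have "0 \<le> shrink S x ! i + d ! i \<and> shrink S x ! i + d ! i \<le> int m" if "i < n" for i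
    using assms that len by (auto simp: cube_def nth_shrink sgn_if dest!: spec[of _ i])
  then show ?thesis
    using len by (simp add: cube_def)
qed

lemma shrink_in_Gamma_vertex_set:
  assumes "\<alpha> < (m + 1) ^ n" "x \<in> Gamma_vertex_set n m \<alpha> r" "S \<subseteq> shrinkable x"
  shows "shrink S x \<in> Gamma_vertex_set n m \<alpha> r"
proof -
  have "delta n m \<alpha> \<in> cube n m"
    using delta_least(1)[OF assms(1)] by (simp add: Hset_def)
  then show ?thesis
    using assms(2,3) antilex_pos_shrink l1_norm_shrink_le[of S x] shrink_add_in_cube
    by (fastforce simp: Gamma_vertex_set_def)
qed

lemma Gamma_vertex_dominated:
  assumes "\<alpha> < (m + 1) ^ n" "4 \<le> r"
    and x: "x \<in> Gamma_vertex_set n m \<alpha> r" "\<not> core_point r x"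
  shows "\<exists>y\<in>Gamma_vertex_set n m \<alpha> r. collapse_rank r y < collapse_rank r x \<and>
    (\<forall>z\<in>Gamma_vertex_set n m \<alpha> r. collapse_rank r z \<le> collapse_rank r x \<longrightarrow>
       manhattan x z \<le> r \<longrightarrow> manhattan y z \<le> r)"
proof -
  have "l1_norm x \<le> r"
    using x(1) by (simp add: Gamma_vertex_set_def)
  then obtain S where "S \<subseteq> shrinkable x" "collapse_rank r (shrink S x) < collapse_rank r x"
    and dom: "\<And>z. length z = length x \<Longrightarrow> l1_norm z \<le> r \<Longrightarrow>
      collapse_rank r z \<le> collapse_rank r x \<Longrightarrow> manhattan x z \<le> r \<Longrightarrow> manhattan (shrink S x) z \<le> r"
    using exists_dominating_shrink assms(2) x(2) by blast
  moreover have "shrink S x \<in> Gamma_vertex_set n m \<alpha> r"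
    using shrink_in_Gamma_vertex_set assms(1) x(1) \<open>S \<subseteq> shrinkable x\<close> by blast
  moreover have "length z = length x" "l1_norm z \<le> r" if "z \<in> Gamma_vertex_set n m \<alpha> r" for z
    using that x(1) by (simp_all add: Gamma_vertex_set_def)
  ultimately show ?thesis
    using dom by blast
qed

lemma Gamma_homotopy_equivalent_core:
  assumes "\<alpha> < (m + 1) ^ n" "4 \<le> r"
  shows "geom_real (Gamma n m \<alpha> r) homotopy_equivalent_space
    geom_real (flag_complex (\<lambda>a b. manhattan a b \<le> r) {x \<in> Gamma_vertex_set n m \<alpha> r. core_point r x})"
proof -
  have "geom_real (flag_complex (\<lambda>a b. manhattan a b \<le> r) (Gamma_vertex_set n m \<alpha> r))
      homotopy_equivalent_space geom_real (flag_complex (\<lambda>a b. manhattan a b \<le> r)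
        {x \<in> Gamma_vertex_set n m \<alpha> r. collapse_rank r x = 0})"
  proof (rule flag_complex_rank_reduction)
    show "finite (Gamma_vertex_set n m \<alpha> r)"
      using finite_Gamma_vertex_set[OF assms(1)] .
    show "manhattan b a \<le> r"
      if "a \<in> Gamma_vertex_set n m \<alpha> r" "b \<in> Gamma_vertex_set n m \<alpha> r" "manhattan a b \<le> r" for a b
      using that manhattan_commute[of a b] by (simp add: Gamma_vertex_set_def)
    show "\<exists>y\<in>Gamma_vertex_set n m \<alpha> r. collapse_rank r y < collapse_rank r x \<and>
        (\<forall>z\<in>Gamma_vertex_set n m \<alpha> r. collapse_rank r z \<le> collapse_rank r x \<longrightarrow>
          manhattan x z \<le> r \<longrightarrow> manhattan y z \<le> r)"
      if "x \<in> Gamma_vertex_set n m \<alpha> r" "0 < collapse_rank r x" for x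
      using Gamma_vertex_dominated[OF assms that(1)] that(2)
      by (metis collapse_rank_eq_0_iff less_irrefl)
  qed
  then show ?thesis
    using Gamma_eq_flag_complex[OF assms(1)] assms(2) by simp
qed

theorem lemma3p6:
  fixes n m \<alpha> :: nat and r :: int
  assumes "n \<ge> 2" and "m \<ge> 1" and "r \<ge> 4"
    and "1 \<le> \<alpha>" and "\<alpha> < (m + 1) ^ n"
  shows "geom_real (Gamma n m \<alpha> r) homotopy_equivalent_space
         geom_real (induced (Gamma n m \<alpha> r)
           {x \<in> vertices (Gamma n m \<alpha> r).
              (\<forall>i<n. \<bar>x ! i\<bar> < \<lfloor>real_of_int r / 2\<rfloor>) \<and>
              (\<forall>j<n. \<forall>k<n. j \<noteq> k \<longrightarrow>
                \<bar>x ! j\<bar> + \<bar>x ! k\<bar> \<le> \<lceil>real_of_int r / 2\<rceil>)})"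
proof -
  let ?A = "\<lambda>a b. manhattan a b \<le> r" and ?N = "Gamma_vertex_set n m \<alpha> r"
  have "Gamma n m \<alpha> r = flag_complex ?A ?N"
    using Gamma_eq_flag_complex assms(3,5) by simp
  moreover have "induced (flag_complex ?A ?N)
      {x \<in> vertices (flag_complex ?A ?N). (\<forall>i<n. \<bar>x ! i\<bar> < \<lfloor>real_of_int r / 2\<rfloor>) \<and>
         (\<forall>j<n. \<forall>k<n. j \<noteq> k \<longrightarrow> \<bar>x ! j\<bar> + \<bar>x ! k\<bar> \<le> \<lceil>real_of_int r / 2\<rceil>)} =
      flag_complex ?A {x \<in> ?N. core_point r x}"
    unfolding induced_flag_complex vertices_flag_complex
    using core_point_iff_floor_ceiling[of _ n r] assms(3)
    by (intro arg_cong[where f = "flag_complex ?A"]) (auto simp: manhattan_self Gamma_vertex_set_def)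
  ultimately show ?thesis
    using Gamma_homotopy_equivalent_core[OF assms(5,3)] by simp
qed

end
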